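(* For an integer $n\ge 3$, $$l_0^{(n-1)^3}(n^3)=\begin{cases}11, & n=3,\\ (n-1)^3+2, & n\ge 4.\end{cases}$$
   Context: For a positive integer $d$ and integer $m$, define $$u_0^d(m)=\binom{m-\lfloor \frac{d}{2}\rfloor -1}{\lfloor \frac{d-1}{2}\rfloor}+\binom{m-\lfloor \frac{d-1}{2}\rfloor -1}{\lfloor \frac{d}{2}\rfloor},$$ where $\binom{a}{b}=0$ when $a<b$; and for a number $x$, $l_0^d(x)=k$ if and only if $k$ is the integer with $u_0^d(k-1)<x\le u_0^d(k)$. *)

theory Defs
  imports Main
begin

text \<open>Binomial coefficient on integers with the convention binom a b = 0 when a < b
  (here b is always nonnegative).\<close>
definition binomz :: "int \<Rightarrow> int \<Rightarrow> int" where
  "binomz a b = (if a < b then 0 else int (nat a choose nat b))"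

definition u0 :: "nat \<Rightarrow> int \<Rightarrow> int" where
  "u0 d m = binomz (m - int (d div 2) - 1) (int ((d - 1) div 2))
          + binomz (m - int ((d - 1) div 2) - 1) (int (d div 2))"

definition l0 :: "nat \<Rightarrow> int \<Rightarrow> int" where
  "l0 d x = (THE k. u0 d (k - 1) < x \<and> x \<le> u0 d k)"

end

theory Submission
  imports Defs
begin

text \<open>Since \<open>u0 d\<close> is monotone, \<open>l0 d x\<close> is pinned down by any \<open>k\<close> with
  \<open>u0 d (k - 1) < x \<le> u0 d k\<close>. Writing \<open>d = a + b + 1\<close> with \<open>a = \<lfloor>d/2\<rfloor>\<close>,
  \<open>b = \<lfloor>(d-1)/2\<rfloor>\<close>, one has \<open>u0 d (d + j) = C(b+j, j) + C(a+j, j)\<close>; so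
  \<open>u0 d (d + 1) = d + 1\<close>, while \<open>u0 d (d + 2)\<close> is quadratic in \<open>d\<close>, at least \<open>d\<^sup>2/4\<close>.
  For \<open>d = (n-1)\<^sup>3\<close> with \<open>n \<ge> 4\<close> the value \<open>n\<^sup>3\<close> exceeds \<open>d + 1\<close> but is
  at most \<open>d\<^sup>2/4\<close>, giving \<open>l0 d (n\<^sup>3) = d + 2\<close>; the case \<open>n = 3\<close> is a direct computation.\<close>

lemma binomz_of_nat: "binomz (int p) (int q) = (if p < q then 0 else int (p choose q))"
  by (simp add: binomz_def)

lemma binomz_mono: "0 \<le> b \<Longrightarrow> a \<le> a' \<Longrightarrow> binomz a b \<le> binomz a' b"
  unfolding binomz_def by (auto intro: binomial_right_mono simp: nat_mono)

lemma u0_mono: "m \<le> m' \<Longrightarrow> u0 d m \<le> u0 d m'"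
  unfolding u0_def by (intro add_mono binomz_mono) auto

lemma l0_eqI:
  assumes "u0 d (k - 1) < x" "x \<le> u0 d k"
  shows "l0 d x = k"
  unfolding l0_def
proof (rule the_equality)
  fix j assume j: "u0 d (j - 1) < x \<and> x \<le> u0 d j"
  show "j = k"
  proof (rule ccontr)
    assume "j \<noteq> k"
    then have "u0 d j \<le> u0 d (k - 1) \<or> u0 d k \<le> u0 d (j - 1)"
      by (metis u0_mono linorder_neqE_linordered_idom zle_diff1_eq)
    with j assms show False by linarith
  qed
qed (use assms in auto)

lemma u0_self_plus:
  assumes "d \<ge> 1"
  shows "u0 d (int (d + j)) =
           int (((d - 1) div 2 + j) choose j) + int ((d div 2 + j) choose j)"
proof -
  define a where "a = d div 2"
  define b where "b = (d - 1) div 2"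
  have d: "d = a + b + 1" using assms unfolding a_def b_def by presburger
  have "int (d + j) - int a - 1 = int (b + j)" "int (d + j) - int b - 1 = int (a + j)"
    using d by simp_all
  then have "u0 d (int (d + j)) = int ((b + j) choose b) + int ((a + j) choose a)"
    unfolding u0_def a_def[symmetric] b_def[symmetric] by (simp only: binomz_of_nat) simp
  then show ?thesis
    unfolding a_def[symmetric] b_def[symmetric]
    using binomial_symmetric[of b "b + j"] binomial_symmetric[of a "a + j"] by simp
qed

lemma u0_self_plus_one:
  assumes "d \<ge> 1"
  shows "u0 d (int d + 1) = int d + 1"
proof -
  have "u0 d (int d + 1) = int ((d - 1) div 2 + 1 choose 1) + int (d div 2 + 1 choose 1)"
    using u0_self_plus[OF assms, of 1] unfolding of_nat_add of_nat_1 .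
  also have "\<dots> = int d + 1"
    using assms by simp
  finally show ?thesis .
qed

lemma square_le_two_mult_choose_two: "(k + 1)\<^sup>2 \<le> 2 * ((k + 2) choose 2)"
proof -
  have "2 * ((k + 2) choose 2) = (k + 2) * (k + 1)"
    unfolding choose_two by simp
  then show ?thesis by (simp add: power2_eq_square)
qed

lemma u0_self_plus_two_ge: "d \<ge> 1 \<Longrightarrow> (int d)\<^sup>2 \<le> 4 * u0 d (int d + 2)"
proof -
  assume "d \<ge> 1"
  define a where "a = d div 2"
  define b where "b = (d - 1) div 2"
  have "b \<le> a" "d \<le> 2 * (b + 1)" unfolding a_def b_def by auto
  then have "d\<^sup>2 \<le> (2 * (b + 1))\<^sup>2" by (simp add: power_mono)
  also have "\<dots> = 2 * (b + 1)\<^sup>2 + 2 * (b + 1)\<^sup>2" by (simp only: power_mult_distrib) simp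
  also have "\<dots> \<le> 2 * (b + 1)\<^sup>2 + 2 * (a + 1)\<^sup>2"
    using \<open>b \<le> a\<close> by (simp add: power_mono)
  also have "\<dots> \<le> 4 * (((b + 2) choose 2) + ((a + 2) choose 2))"
    using square_le_two_mult_choose_two[of a] square_le_two_mult_choose_two[of b] by simp
  finally have "int (d\<^sup>2) \<le> int (4 * (((b + 2) choose 2) + ((a + 2) choose 2)))"
    by (simp only: of_nat_le_iff)
  then show ?thesis
    using u0_self_plus[OF \<open>d \<ge> 1\<close>, of 2] unfolding a_def b_def by (simp add: add.commute)
qed

lemma l0_eq_self_plus_two:
  assumes "d \<ge> 1" "int d + 1 < x" "4 * x \<le> (int d)\<^sup>2"
  shows "l0 d x = int d + 2"
proof (rule l0_eqI)
  have "int d + 2 - 1 = int d + 1" by simp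
  then show "u0 d (int d + 2 - 1) < x"
    using u0_self_plus_one[OF assms(1)] assms(2) by (simp only:)
  show "x \<le> u0 d (int d + 2)"
    using u0_self_plus_two_ge[OF assms(1)] assms(3) by linarith
qed

lemma cube_bounds:
  fixes m :: nat assumes "m \<ge> 3"
  shows "m ^ 3 + 1 < (m + 1) ^ 3" "4 * (m + 1) ^ 3 \<le> (m ^ 3)\<^sup>2"
proof -
  show "m ^ 3 + 1 < (m + 1) ^ 3" using assms
    by (simp add: power3_eq_cube algebra_simps)
  have "3 * m \<le> m * m" using assms by (intro mult_right_mono) auto
  moreover have "2 * (m + 1) \<le> 3 * m" using assms by simp
  ultimately have "2 * (m + 1) \<le> m * m" by (rule order_trans[rotated])
  then have "(2 * (m + 1)) ^ 3 \<le> (m * m) ^ 3" by (rule power_mono) simp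
  then show "4 * (m + 1) ^ 3 \<le> (m ^ 3)\<^sup>2"
    by (simp add: power_mult_distrib power2_eq_square power3_eq_cube algebra_simps)
qed

lemma l0_8_27: "l0 8 27 = 11"
proof -
  have "(5::nat) choose 3 = 10" "(6::nat) choose 4 = 15"
       "(6::nat) choose 3 = 20" "(7::nat) choose 4 = 35"
    by (simp_all add: numeral_eq_Suc)
  then show ?thesis by (intro l0_eqI) (simp_all add: u0_def binomz_def)
qed

theorem corollary7:
  fixes n :: nat
  assumes "n \<ge> 3"
  shows "l0 ((n - 1) ^ 3) (int (n ^ 3)) =
           (if n = 3 then 11 else int ((n - 1) ^ 3) + 2)"
proof (cases "n = 3")
  case True
  then show ?thesis using l0_8_27 by simp
next
  case False
  define m where "m = n - 1"
  have "m \<ge> 3" and n: "n = m + 1" using False assms unfolding m_def by auto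
  from cube_bounds[OF this(1)]
  have "int (m ^ 3 + 1) < int (n ^ 3)" "int (4 * n ^ 3) \<le> int ((m ^ 3)\<^sup>2)"
    unfolding n by (simp_all only: of_nat_le_iff of_nat_less_iff)
  then have "int (m ^ 3) + 1 < int (n ^ 3)" "4 * int (n ^ 3) \<le> (int (m ^ 3))\<^sup>2"
    by simp_all
  with \<open>m \<ge> 3\<close> have "l0 (m ^ 3) (int (n ^ 3)) = int (m ^ 3) + 2"
    by (intro l0_eq_self_plus_two) simp_all
  with False show ?thesis unfolding m_def by simp
qed

end
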